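(* Let $\mathcal{H}$ be a real Hilbert space of dimension $d$, $G>0$, $\mathcal{G}=\{g\in\mathcal{H}:\|g\|\le G\}$, $\theta\in\mathcal{H}$ fixed, and $h:\mathbb{R}\to\mathbb{R}$ an even convex function that is increasing on $[0,\infty)$. Consider the one-round game \[ H=\min_{w\in\mathcal{H}}\max_{g\in\mathcal{G}}\ \langle w,g\rangle+h(\|\theta-g\|). \] If $d>1$, $h$ is twice differentiable, and $h''(x)\le h'(x)/x$ for all $x>0$, then \[ H=h\Big(\sqrt{\|\theta\|^2+G^2}\Big)\qquad\text{and}\qquad w^*=\frac{\theta}{\sqrt{\|\theta\|^2+G^2}}\,h'\Big(\sqrt{\|\theta\|^2+G^2}\Big), \] and any $g^*\in\mathcal{H}$ with $\langle\theta,g^*\rangle=0$ and $\|g^*\|=G$ is a minimax play for the adversary.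
   Context: Write $H(w,g)=\langle w,g\rangle+h(\|\theta-g\|)$. $w^*=\arg\min_w\max_{g\in\mathcal{G}}H(w,g)$ is the minimax play of the player, and a minimax play of the adversary is a $g^*\in\arg\max_{g\in\mathcal{G}}H(w^*,g)$. *)

theory Defs
  imports "HOL-Analysis.Analysis"
begin

definition game_payoff :: "(real \<Rightarrow> real) \<Rightarrow> 'a::real_inner \<Rightarrow> 'a \<Rightarrow> 'a \<Rightarrow> real" where
  "game_payoff h \<theta> w g = inner w g + h (norm (\<theta> - g))"

definition game_value :: "(real \<Rightarrow> real) \<Rightarrow> 'a::real_inner \<Rightarrow> real \<Rightarrow> real" where
  "game_value h \<theta> G = (INF w. SUP g\<in>cball 0 G. game_payoff h \<theta> w g)"

end

theory Submission
  imports Defs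
begin

text \<open>Let r = sqrt (norm \<theta>^2 + G^2) and c = h'(r) / r. The curvature bound h'' \<le> h'/x says that
  h'(x)/x is nonincreasing on (0, \<infinity>), so h lies below the parabola s \<mapsto> h r + c (s^2 - r^2) / 2
  on [0, \<infinity>). Since norm (\<theta> - g)^2 \<le> r^2 - 2 inner \<theta> g on the ball, the player's move c \<theta>
  caps the payoff at h r. Conversely, against any w the adversary picks one of \<plusminus>g with g
  orthogonal to \<theta> and norm g = G (possible as the dimension exceeds 1), earning at least h r.\<close>

lemma has_real_derivative_nonneg_if_mono_on_atLeast:
  fixes f :: "real \<Rightarrow> real"
  assumes mono: "mono_on {a..} f" and deriv: "(f has_real_derivative D) (at x)" and "a \<le> x"
  shows "0 \<le> D"
proof (rule ccontr)
  assume "\<not> 0 \<le> D"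
  then obtain d where "d > 0" and "\<And>e. 0 < e \<Longrightarrow> e < d \<Longrightarrow> f (x + e) < f x"
    using DERIV_neg_dec_right[OF deriv] by force
  then have "f (x + d/2) < f x" by simp
  moreover have "f x \<le> f (x + d/2)"
    using mono \<open>a \<le> x\<close> \<open>d > 0\<close> by (auto simp: mono_on_def)
  ultimately show False by simp
qed

lemma divide_id_antimono_if_deriv_le:
  fixes f f' :: "real \<Rightarrow> real"
  assumes deriv: "\<And>x. 0 < x \<Longrightarrow> (f has_real_derivative f' x) (at x)"
    and bound: "\<And>x. 0 < x \<Longrightarrow> f' x \<le> f x / x"
    and "0 < a" "a \<le> b"
  shows "f b / b \<le> f a / a"
proof (rule DERIV_nonpos_imp_nonincreasing[OF \<open>a \<le> b\<close>])
  fix x assume "a \<le> x" "x \<le> b"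
  with \<open>0 < a\<close> have "0 < x" by simp
  have "((\<lambda>x. f x / x) has_real_derivative (f' x * x - f x) / x\<^sup>2) (at x)"
    using DERIV_quotient[OF deriv[OF \<open>0 < x\<close>] DERIV_ident] \<open>0 < x\<close>
    by (simp add: power2_eq_square)
  moreover have "f' x * x \<le> f x"
    using bound[OF \<open>0 < x\<close>] \<open>0 < x\<close> by (simp add: pos_le_divide_eq)
  then have "(f' x * x - f x) / x\<^sup>2 \<le> 0"
    by (simp add: divide_nonpos_nonneg)
  ultimately show "\<exists>y. ((\<lambda>x. f x / x) has_real_derivative y) (at x) \<and> y \<le> 0"
    by blast
qed

lemma quadratic_majorant_if_deriv_divide_antimono:
  fixes h h' :: "real \<Rightarrow> real"
  assumes deriv: "\<And>x. 0 \<le> x \<Longrightarrow> (h has_real_derivative h' x) (at x)"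
    and nonneg_0: "0 \<le> h' 0"
    and antimono: "\<And>a b. 0 < a \<Longrightarrow> a \<le> b \<Longrightarrow> h' b / b \<le> h' a / a"
    and "0 < r" "0 \<le> s"
  shows "h s \<le> h r + h' r / r * (s\<^sup>2 - r\<^sup>2) / 2"
proof -
  define c where "c = h' r / r"
  define F where "F x = h x - c * x\<^sup>2 / 2" for x
  have dF: "(F has_real_derivative h' x - c * x) (at x)" if "0 \<le> x" for x
    unfolding F_def using deriv[OF that] by (auto intro!: derivative_eq_intros)
  have "F s \<le> F r"
  proof (cases "s \<le> r")
    case True
    show ?thesis
    proof (rule DERIV_nonneg_imp_nondecreasing[OF True])
      fix x assume "s \<le> x" "x \<le> r"
      have "c * x \<le> h' x"
      proof (cases "x = 0")
        case False
        with \<open>s \<le> x\<close> \<open>0 \<le> s\<close> have "0 < x" by simp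
        with antimono[OF this \<open>x \<le> r\<close>] show ?thesis by (simp add: c_def le_divide_eq)
      qed (simp add: nonneg_0)
      then show "\<exists>y. (F has_real_derivative y) (at x) \<and> 0 \<le> y"
        using dF[of x] \<open>0 \<le> s\<close> \<open>s \<le> x\<close> by (intro exI[of _ "h' x - c * x"]) simp
    qed
  next
    case False
    show ?thesis
    proof (rule DERIV_nonpos_imp_nonincreasing[of r s F])
      show "r \<le> s" using False by simp
      fix x assume "r \<le> x" "x \<le> s"
      with \<open>0 < r\<close> have "0 < x" by simp
      with antimono[OF \<open>0 < r\<close> \<open>r \<le> x\<close>] have "h' x \<le> c * x"
        by (simp add: c_def divide_le_eq)
      then show "\<exists>y. (F has_real_derivative y) (at x) \<and> y \<le> 0"
        using dF[of x] \<open>0 < x\<close> by (intro exI[of _ "h' x - c * x"]) simp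
    qed
  qed
  then show ?thesis
    by (simp add: F_def c_def right_diff_distrib diff_divide_distrib)
qed

lemma exists_orthogonal_of_norm:
  fixes \<theta> :: "'a::euclidean_space"
  assumes "DIM('a) > 1" and "0 \<le> G"
  obtains u where "inner \<theta> u = 0" and "norm u = G"
proof -
  obtain v where "v \<noteq> 0" and "orthogonal \<theta> v"
    using orthogonal_to_vector_exists[of \<theta>] assms(1) by auto
  then show thesis
    using that[of "(G / norm v) *\<^sub>R v"] \<open>0 \<le> G\<close> by (simp add: orthogonal_def)
qed

lemma game_payoff_orthogonal:
  fixes \<theta> g :: "'a::real_inner"
  assumes "inner \<theta> g = 0"
  shows "game_payoff h \<theta> w g = inner w g + h (sqrt (norm \<theta> ^ 2 + norm g ^ 2))"
proof -
  have "(norm (\<theta> + - g))\<^sup>2 = (norm \<theta>)\<^sup>2 + (norm (- g))\<^sup>2"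
    using assms by (intro norm_add_Pythagorean) (simp add: orthogonal_def)
  then have "norm (\<theta> - g) = sqrt (norm \<theta> ^ 2 + norm g ^ 2)"
    by (simp add: real_sqrt_unique)
  then show ?thesis by (simp add: game_payoff_def)
qed

lemma bdd_above_game_payoff:
  fixes \<theta> :: "'a::euclidean_space"
  assumes "continuous_on UNIV h"
  shows "bdd_above (game_payoff h \<theta> w ` cball 0 G)"
proof -
  have "continuous_on (cball 0 G) (game_payoff h \<theta> w)"
    unfolding game_payoff_def
    by (intro continuous_intros continuous_on_compose2[OF assms]) auto
  then show ?thesis
    by (intro bounded_imp_bdd_above compact_imp_bounded compact_continuous_image) auto
qed

lemma game_payoff_scaled_le:
  fixes \<theta> :: "'a::real_inner"
  assumes "0 \<le> c"
    and majorant: "\<And>s. 0 \<le> s \<Longrightarrow> h s \<le> h r + c * (s\<^sup>2 - r\<^sup>2) / 2"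
    and r: "r\<^sup>2 = norm \<theta> ^ 2 + G ^ 2" and g: "norm g \<le> G"
  shows "game_payoff h \<theta> (c *\<^sub>R \<theta>) g \<le> h r"
proof -
  define s where "s = norm (\<theta> - g)"
  have "s\<^sup>2 = norm \<theta> ^ 2 - 2 * inner \<theta> g + norm g ^ 2"
    unfolding s_def by (simp add: power2_norm_eq_inner algebra_simps inner_commute)
  moreover have "norm g ^ 2 \<le> G ^ 2"
    using g by (simp add: power_mono)
  ultimately have "inner \<theta> g \<le> (r\<^sup>2 - s\<^sup>2) / 2"
    using r by simp
  then have "c * inner \<theta> g \<le> c * ((r\<^sup>2 - s\<^sup>2) / 2)"
    using \<open>0 \<le> c\<close> by (rule mult_left_mono)
  moreover have "c * ((r\<^sup>2 - s\<^sup>2) / 2) + c * (s\<^sup>2 - r\<^sup>2) / 2 = 0"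
    by (simp add: field_simps)
  ultimately show ?thesis
    using majorant[of s] by (simp add: game_payoff_def s_def)
qed

lemma game_payoff_sup_ge:
  fixes \<theta> :: "'a::euclidean_space"
  assumes "continuous_on UNIV h" and "DIM('a) > 1" and "0 \<le> G"
  shows "h (sqrt (norm \<theta> ^ 2 + G ^ 2)) \<le> (SUP g\<in>cball 0 G. game_payoff h \<theta> w g)"
proof -
  obtain u where u: "inner \<theta> u = 0" "norm u = G"
    using exists_orthogonal_of_norm assms(2,3) by blast
  obtain g where "g = u \<or> g = - u" and "0 \<le> inner w g"
    by (metis inner_minus_right neg_0_le_iff_le nle_le)
  with u have "h (sqrt (norm \<theta> ^ 2 + G ^ 2)) \<le> game_payoff h \<theta> w g"
    and "g \<in> cball 0 G"
    by (auto simp: game_payoff_orthogonal)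
  then show ?thesis
    using cSUP_upper[OF _ bdd_above_game_payoff[OF assms(1)]] order_trans by blast
qed

theorem lemma5:
  fixes h :: "real \<Rightarrow> real" and \<theta> :: "'a::euclidean_space" and G :: real
  assumes G_pos: "G > 0"
    and dim: "DIM('a) > 1"
    and even: "\<And>x. h (- x) = h x"
    and convex: "convex_on UNIV h"
    and incr: "mono_on {0..} h"
    and diff1: "\<And>x. h differentiable (at x)"
    and diff2: "\<And>x. (deriv h) differentiable (at x)"
    and curv: "\<And>x. x > 0 \<Longrightarrow> deriv (deriv h) x \<le> deriv h x / x"
  shows "let r = sqrt (norm \<theta> ^ 2 + G ^ 2);
             wstar = (deriv h r / r) *\<^sub>R \<theta>
         in game_value h \<theta> G = h r
          \<and> (\<forall>w. (SUP g\<in>cball 0 G. game_payoff h \<theta> wstar g)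
                   \<le> (SUP g\<in>cball 0 G. game_payoff h \<theta> w g))
          \<and> (SUP g\<in>cball 0 G. game_payoff h \<theta> wstar g) = game_value h \<theta> G
          \<and> (\<forall>gs. inner \<theta> gs = 0 \<and> norm gs = G \<longrightarrow>
               (\<forall>g\<in>cball 0 G. game_payoff h \<theta> wstar g \<le> game_payoff h \<theta> wstar gs))"
proof -
  define r where "r = sqrt (norm \<theta> ^ 2 + G ^ 2)"
  define wstar where "wstar = (deriv h r / r) *\<^sub>R \<theta>"
  define S where "S w = (SUP g\<in>cball 0 G. game_payoff h \<theta> w g)" for w
  have "0 < r" and r2: "r\<^sup>2 = norm \<theta> ^ 2 + G ^ 2"
    using G_pos by (auto simp: r_def add_nonneg_pos)
  have d1: "(h has_real_derivative deriv h x) (at x)" for x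
    using diff1 DERIV_deriv_iff_real_differentiable by blast
  have d2: "(deriv h has_real_derivative deriv (deriv h) x) (at x)" for x
    using diff2 DERIV_deriv_iff_real_differentiable by blast
  have h'_nonneg: "0 \<le> deriv h x" if "0 \<le> x" for x
    using has_real_derivative_nonneg_if_mono_on_atLeast[OF incr d1 that] .
  have majorant: "h s \<le> h r + deriv h r / r * (s\<^sup>2 - r\<^sup>2) / 2" if "0 \<le> s" for s
    using quadratic_majorant_if_deriv_divide_antimono[OF d1 h'_nonneg
        divide_id_antimono_if_deriv_le[OF d2 curv] \<open>0 < r\<close> that] by simp
  have wstar_le: "game_payoff h \<theta> wstar g \<le> h r" if "g \<in> cball 0 G" for g
    unfolding wstar_def using h'_nonneg[of r] \<open>0 < r\<close> that
    by (intro game_payoff_scaled_le[OF _ majorant r2]) auto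
  have at_orthogonal: "game_payoff h \<theta> wstar gs = h r" if "inner \<theta> gs = 0" "norm gs = G" for gs
    using that by (simp add: game_payoff_orthogonal wstar_def r_def)
  have hcont: "continuous_on UNIV h"
    using diff1 by (simp add: differentiable_imp_continuous_on differentiable_on_def)
  have lower: "h r \<le> S w" for w
    unfolding r_def S_def using game_payoff_sup_ge[OF hcont dim] G_pos by simp
  obtain u where "inner \<theta> u = 0" "norm u = G"
    using exists_orthogonal_of_norm dim G_pos by (metis less_imp_le)
  then have "S wstar = h r"
    unfolding S_def
    by (intro cSup_eq_maximum) (auto intro!: rev_image_eqI[of u] simp: at_orthogonal wstar_le)
  moreover have "game_value h \<theta> G = S wstar"
    unfolding game_value_def S_def[symmetric] using lower \<open>S wstar = h r\<close>
    by (intro cInf_eq_minimum) (auto intro: rev_image_eqI[of wstar])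
  ultimately show ?thesis
    using lower wstar_le at_orthogonal
    by (simp add: Let_def r_def[symmetric] wstar_def[symmetric] S_def[symmetric])
qed

end
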